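(* For any finite alphabet $\mathfrak{G}$ and any $\mathfrak{G}$-trees $\mathfrak{s}$ and $\mathfrak{t}$ such that $\mathfrak{s}\preceq\mathfrak{t}$, in the $\mathfrak{G}$-prefix poset, $\#[\mathfrak{s},\mathfrak{t}] = \mathrm{ld}(\mathrm{sh}(\lozenge_{|\mathfrak{s}|}[\mathfrak{t}\setminus\mathfrak{s}]))$.
   Context: $\mathfrak{G}$ is a finite alphabet (letters with arities $\geq 1$). A $\mathfrak{G}$-tree is either the leaf (the tree with no internal node) or a root decorated by a letter $\mathtt{a}\in\mathfrak{G}$ with $|\mathtt{a}|$ children that are $\mathfrak{G}$-trees; $|\mathfrak{s}|$ is the number of leaves. The $\mathfrak{G}$-prefix poset is the set of $\mathfrak{G}$-trees ordered by $\mathfrak{s}\preceq\mathfrak{t}$ iff $\mathfrak{t}$ is obtained by grafting $\mathfrak{G}$-trees $\mathfrak{r}_1,\dots,\mathfrak{r}_{|\mathfrak{s}|}$ onto the leaves of $\mathfrak{s}$ (left to right); then $\mathfrak{t}\setminus\mathfrak{s} := (\mathfrak{r}_1,\dots,\mathfrak{r}_{|\mathfrak{s}|})$. $\lozenge_k[\mathfrak{r}_1,\dots,\mathfrak{r}_k]$ is the tree with root decorated by a new letter $\lozenge_k$ of arity $k$ and children $\mathfrak{r}_1,\dots,\mathfrak{r}_k$. A shadow is a finite (possibly empty) multiset of shadows. For a tree $\mathfrak{t}$ different from the leaf with root of arity $k$, $\mathrm{sh}(\mathfrak{t})$ is the multiset of the $\mathrm{sh}(\mathfrak{t}(i))$ over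 those $i\in[k]$ such that the $i$-th subtree $\mathfrak{t}(i)$ is not the leaf. The load of a shadow is defined recursively by $\mathrm{ld}(\{s_1,\dots,s_k\}) = \prod_{i\in[k]}(1+\mathrm{ld}(s_i))$ (so the empty shadow has load $1$). *)

theory Defs
  imports "HOL-Library.Multiset"
begin

datatype 'a gtree = Leaf | Node 'a "'a gtree list"

fun is_gtree :: "'a set \<Rightarrow> ('a \<Rightarrow> nat) \<Rightarrow> 'a gtree \<Rightarrow> bool" where
  "is_gtree G ar Leaf = True"
| "is_gtree G ar (Node a ts) =
     (a \<in> G \<and> length ts = ar a \<and> (\<forall>t\<in>set ts. is_gtree G ar t))"

fun nleaves :: "'a gtree \<Rightarrow> nat" where
  "nleaves Leaf = 1"
| "nleaves (Node a ts) = sum_list (map nleaves ts)"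

fun graft :: "'a gtree \<Rightarrow> 'a gtree list \<Rightarrow> 'a gtree"
and graft_list :: "'a gtree list \<Rightarrow> 'a gtree list \<Rightarrow> 'a gtree list" where
  "graft Leaf rs = hd rs"
| "graft (Node a ss) rs = Node a (graft_list ss rs)"
| "graft_list [] rs = []"
| "graft_list (s # ss) rs =
     graft s (take (nleaves s) rs) # graft_list ss (drop (nleaves s) rs)"

definition prefix_le :: "'a set \<Rightarrow> ('a \<Rightarrow> nat) \<Rightarrow> 'a gtree \<Rightarrow> 'a gtree \<Rightarrow> bool" where
  "prefix_le G ar s t \<longleftrightarrow> is_gtree G ar s \<and> is_gtree G ar t \<and>
     (\<exists>rs. length rs = nleaves s \<and> (\<forall>r\<in>set rs. is_gtree G ar r) \<and> t = graft s rs)"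

definition tree_diff :: "'a gtree \<Rightarrow> 'a gtree \<Rightarrow> 'a gtree list" where
  "tree_diff t s = (THE rs. length rs = nleaves s \<and> graft s rs = t)"

definition prefix_interval :: "'a set \<Rightarrow> ('a \<Rightarrow> nat) \<Rightarrow> 'a gtree \<Rightarrow> 'a gtree \<Rightarrow> 'a gtree set" where
  "prefix_interval G ar s t = {u. prefix_le G ar s u \<and> prefix_le G ar u t}"

text \<open>Diamond_k[r_1,...,r_k]: root decorated by a new letter (None), the old letters embedded via Some.\<close>
definition diamond :: "'a gtree list \<Rightarrow> 'a option gtree" where
  "diamond rs = Node None (map (map_gtree Some) rs)"

datatype shadow = Sh "shadow multiset"

fun sh :: "'a gtree \<Rightarrow> shadow" where
  "sh Leaf = Sh {#}"  (* not used: the shadow is only defined for non-leaf trees *)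
| "sh (Node a ts) = Sh (mset (map sh (filter (\<lambda>t. t \<noteq> Leaf) ts)))"

primrec ld :: "shadow \<Rightarrow> nat" where
  "ld (Sh M) = prod_mset (image_mset (\<lambda>s. 1 + ld s) M)"

end

theory Submission
  imports Defs
begin

text \<open>
  Being a prefix is a structural relation: \<open>u\<close> is obtained from \<open>r\<close> by cutting some subtrees
  down to leaves. Every element \<open>u\<close> of the interval \<open>[s, graft s vs]\<close> is \<open>graft s ws\<close> with
  each \<open>ws ! i\<close> a prefix of \<open>vs ! i\<close>, so the interval is in bijection with a product of the
  sets of prefixes of the \<open>vs ! i\<close>. A non-leaf tree \<open>r = Node a ts\<close> has as prefixes the leaf and
  the nodes \<open>Node a us\<close> with \<open>us\<close> componentwise prefixes of \<open>ts\<close>; so its number of prefixes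
  satisfies the recursion \<open>1 + \<Prod>\<close>, which is the recursion of the load of the shadow.
\<close>

inductive gtree_prefix :: "'a gtree \<Rightarrow> 'a gtree \<Rightarrow> bool" where
  Leaf_prefix: "gtree_prefix Leaf r"
| Node_prefix: "list_all2 gtree_prefix us rs \<Longrightarrow> gtree_prefix (Node a us) (Node a rs)"
monos list_all2_mono

lemma gtree_prefix_Leaf_right_iff [simp]: "gtree_prefix u Leaf \<longleftrightarrow> u = Leaf"
  by (auto elim: gtree_prefix.cases intro: Leaf_prefix)

lemma gtree_prefix_Node_left_iff [simp]:
  "gtree_prefix (Node a ss) u \<longleftrightarrow> (\<exists>us. u = Node a us \<and> list_all2 gtree_prefix ss us)"
  by (auto elim: gtree_prefix.cases intro: Node_prefix)

lemma gtree_prefix_Node_right_iff: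
  "gtree_prefix u (Node a ts) \<longleftrightarrow> u = Leaf \<or> (\<exists>us. u = Node a us \<and> list_all2 gtree_prefix us ts)"
  by (auto elim: gtree_prefix.cases intro: Node_prefix Leaf_prefix)

lemma length_graft_list [simp]: "length (graft_list ss vs) = length ss"
  by (induction ss arbitrary: vs) auto

lemma gtree_prefix_graft:
  "gtree_prefix u (graft u vs)" and "list_all2 gtree_prefix ss (graft_list ss vs)"
  by (induction u vs and ss vs rule: graft_graft_list.induct) (auto intro: Leaf_prefix)

lemma gtree_prefix_imp_graft:
  assumes "gtree_prefix u r"
  shows "\<exists>vs. length vs = nleaves u \<and> r = graft u vs"
  using assms
proof (induction rule: gtree_prefix.induct)
  case (Leaf_prefix r)
  show ?case by (intro exI[of _ "[r]"]) simp
next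
  case (Node_prefix us rs a)
  have "\<exists>vs. length vs = sum_list (map nleaves us) \<and> rs = graft_list us vs"
    using Node_prefix.IH
  proof (induction rule: list_all2_induct)
    case Nil
    show ?case by simp
  next
    case (Cons u us r rs)
    then obtain v1 v2 where "length v1 = nleaves u" "r = graft u v1"
      and "length v2 = sum_list (map nleaves us)" "rs = graft_list us v2"
      by blast
    then show ?case by (intro exI[of _ "v1 @ v2"]) simp
  qed
  then show ?case by simp
qed

lemma is_gtree_graft_iff:
  "length vs = nleaves s \<Longrightarrow>
     is_gtree G ar (graft s vs) \<longleftrightarrow> is_gtree G ar s \<and> (\<forall>v\<in>set vs. is_gtree G ar v)"
  and "length vs = sum_list (map nleaves ss) \<Longrightarrow>
     (\<forall>t\<in>set (graft_list ss vs). is_gtree G ar t) \<longleftrightarrow>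
       (\<forall>s\<in>set ss. is_gtree G ar s) \<and> (\<forall>v\<in>set vs. is_gtree G ar v)"
proof (induction s vs and ss vs rule: graft_graft_list.induct)
  case (1 vs)
  then obtain v where "vs = [v]" by (cases vs) auto
  then show ?case by simp
next
  case (4 s ss vs)
  have "set vs = set (take (nleaves s) vs) \<union> set (drop (nleaves s) vs)"
    by (metis append_take_drop_id set_append)
  with 4 show ?case by auto
qed auto

lemma graft_inject:
  "length vs = nleaves s \<Longrightarrow> length ws = nleaves s \<Longrightarrow> graft s vs = graft s ws \<Longrightarrow> vs = ws"
  and "length vs = sum_list (map nleaves ss) \<Longrightarrow> length ws = sum_list (map nleaves ss) \<Longrightarrow>
       graft_list ss vs = graft_list ss ws \<Longrightarrow> vs = ws"
proof (induction s vs and ss vs arbitrary: ws and ws rule: graft_graft_list.induct)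
  case (1 vs)
  then show ?case by (cases vs; cases ws) auto
next
  case (4 s ss vs)
  then have "take (nleaves s) vs = take (nleaves s) ws" "drop (nleaves s) vs = drop (nleaves s) ws"
    by simp_all
  then show ?case by (metis append_take_drop_id)
qed auto

lemma gtree_prefix_graft_graft_iff:
  "length ws = nleaves s \<Longrightarrow> length vs = nleaves s \<Longrightarrow>
     gtree_prefix (graft s ws) (graft s vs) \<longleftrightarrow> list_all2 gtree_prefix ws vs"
  and "length ws = sum_list (map nleaves ss) \<Longrightarrow> length vs = sum_list (map nleaves ss) \<Longrightarrow>
     list_all2 gtree_prefix (graft_list ss ws) (graft_list ss vs) \<longleftrightarrow> list_all2 gtree_prefix ws vs"
proof (induction s ws and ss ws arbitrary: vs and vs rule: graft_graft_list.induct)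
  case (1 ws)
  then show ?case by (cases ws; cases vs) auto
next
  case (2 a ss ws)
  then show ?case by simp
next
  case (3 ws)
  then show ?case by simp
next
  case (4 s ss ws)
  let ?n = "nleaves s"
  have "list_all2 gtree_prefix ws vs \<longleftrightarrow>
      list_all2 gtree_prefix (take ?n ws) (take ?n vs) \<and> list_all2 gtree_prefix (drop ?n ws) (drop ?n vs)"
    using "4.prems" by (metis append_take_drop_id length_take list_all2_append)
  moreover have "gtree_prefix (graft s (take ?n ws)) (graft s (take ?n vs)) \<longleftrightarrow>
      list_all2 gtree_prefix (take ?n ws) (take ?n vs)"
    using "4.prems" by (intro "4.IH"(1)) simp_all
  moreover have "list_all2 gtree_prefix (graft_list ss (drop ?n ws)) (graft_list ss (drop ?n vs)) \<longleftrightarrow>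
      list_all2 gtree_prefix (drop ?n ws) (drop ?n vs)"
    using "4.prems" by (intro "4.IH"(2)) simp_all
  ultimately show ?case by (simp only: graft_list.simps list_all2_Cons)
qed

lemma tree_diff_graft: "length vs = nleaves s \<Longrightarrow> tree_diff (graft s vs) s = vs"
  unfolding tree_diff_def using graft_inject(1)[of _ s vs] by (intro the_equality) auto

lemma prefix_le_iff: "prefix_le G ar u r \<longleftrightarrow> is_gtree G ar r \<and> gtree_prefix u r"
proof
  assume "prefix_le G ar u r"
  then show "is_gtree G ar r \<and> gtree_prefix u r"
    unfolding prefix_le_def using gtree_prefix_graft(1) by blast
next
  assume r: "is_gtree G ar r \<and> gtree_prefix u r"
  then obtain vs where "length vs = nleaves u" and "r = graft u vs"
    using gtree_prefix_imp_graft by blast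
  with r show "prefix_le G ar u r"
    unfolding prefix_le_def using is_gtree_graft_iff(1) by blast
qed

lemma prefix_interval_graft:
  assumes vs: "length vs = nleaves s" and t: "is_gtree G ar (graft s vs)"
  shows "prefix_interval G ar s (graft s vs) = graft s ` {ws. list_all2 gtree_prefix ws vs}"
proof (intro set_eqI iffI)
  fix u assume "u \<in> prefix_interval G ar s (graft s vs)"
  then have "gtree_prefix s u" and u: "gtree_prefix u (graft s vs)"
    unfolding prefix_interval_def prefix_le_iff by auto
  then obtain ws where ws: "length ws = nleaves s" "u = graft s ws"
    using gtree_prefix_imp_graft by blast
  with u vs have "list_all2 gtree_prefix ws vs"
    using gtree_prefix_graft_graft_iff(1) by blast
  with ws show "u \<in> graft s ` {ws. list_all2 gtree_prefix ws vs}" by blast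
next
  fix u assume "u \<in> graft s ` {ws. list_all2 gtree_prefix ws vs}"
  then obtain ws where ws: "u = graft s ws" "list_all2 gtree_prefix ws vs" by blast
  with vs have "length ws = nleaves s" by (simp add: list_all2_lengthD)
  with ws vs have "gtree_prefix u (graft s vs)"
    using gtree_prefix_graft_graft_iff(1) by blast
  with t have "prefix_le G ar u (graft s vs)" by (simp add: prefix_le_iff)
  then have "is_gtree G ar u" by (simp add: prefix_le_def)
  with \<open>gtree_prefix u (graft s vs)\<close> t ws show "u \<in> prefix_interval G ar s (graft s vs)"
    unfolding prefix_interval_def prefix_le_iff using gtree_prefix_graft(1) by blast
qed

lemma card_list_all2:
  "card {us. list_all2 R us ts} = prod_list (map (\<lambda>t. card {u. R u t}) ts)"
proof (induction ts)
  case (Cons t ts)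
  have "{us. list_all2 R us (t # ts)} = (\<lambda>(u, us). u # us) ` ({u. R u t} \<times> {us. list_all2 R us ts})"
    by (auto simp: list_all2_Cons2)
  moreover have "inj_on (\<lambda>(u, us). u # us) ({u. R u t} \<times> {us. list_all2 R us ts})"
    by (auto simp: inj_on_def)
  ultimately show ?case
    using Cons.IH by (simp add: card_image card_cartesian_product)
qed simp

text \<open>The factor a child \<open>r\<close> contributes to the load of its parent's shadow: leaf children are
  dropped from the shadow and so contribute \<open>1\<close>.\<close>

definition shadow_factor :: "'a gtree \<Rightarrow> nat" where
  "shadow_factor r = (if r = Leaf then 1 else 1 + ld (sh r))"

lemma ld_Sh_mset: "ld (Sh (mset xs)) = prod_list (map (\<lambda>x. 1 + ld x) xs)"
  by (simp add: prod_mset_prod_list[symmetric])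

lemma ld_sh_Node: "ld (sh (Node a ts)) = prod_list (map shadow_factor ts)"
proof -
  have "ld (sh (Node a ts)) = prod_list (map (\<lambda>t. 1 + ld (sh t)) (filter (\<lambda>t. t \<noteq> Leaf) ts))"
    by (simp only: sh.simps ld_Sh_mset map_map comp_def)
  also have "\<dots> = prod_list (map shadow_factor ts)"
    by (induction ts) (auto simp: shadow_factor_def)
  finally show ?thesis .
qed

lemma shadow_factor_Node: "shadow_factor (Node a ts) = 1 + prod_list (map shadow_factor ts)"
  unfolding shadow_factor_def[of "Node a ts"] ld_sh_Node by simp

lemma map_gtree_eq_Leaf_iff [simp]: "map_gtree f r = Leaf \<longleftrightarrow> r = Leaf"
  by (cases r) simp_all

lemma sh_map_gtree: "sh (map_gtree f r) = sh r"
proof (induction r)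
  case (Node a ts)
  have "filter (\<lambda>t. t \<noteq> Leaf) (map (map_gtree f) ts) = map (map_gtree f) (filter (\<lambda>t. t \<noteq> Leaf) ts)"
    by (induction ts) auto
  with Node.IH show ?case by (auto simp: comp_def intro!: image_mset_cong)
qed simp

lemma shadow_factor_map_gtree: "shadow_factor (map_gtree f r) = shadow_factor r"
  by (simp add: shadow_factor_def sh_map_gtree)

lemma ld_sh_diamond: "ld (sh (diamond vs)) = prod_list (map shadow_factor vs)"
  unfolding diamond_def ld_sh_Node by (simp add: comp_def shadow_factor_map_gtree)

lemma card_gtree_prefixes: "card {u. gtree_prefix u r} = shadow_factor r"
proof (induction r)
  case Leaf
  show ?case by (simp add: shadow_factor_def)
next
  case (Node a ts)
  let ?U = "{us. list_all2 gtree_prefix us ts}"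
  have prefixes: "{u. gtree_prefix u (Node a ts)} = insert Leaf (Node a ` ?U)"
    by (auto simp: gtree_prefix_Node_right_iff)
  have "map (\<lambda>t. card {u. gtree_prefix u t}) ts = map shadow_factor ts"
    using Node.IH by simp
  then have card_U: "card ?U = prod_list (map shadow_factor ts)"
    by (simp only: card_list_all2)
  moreover have "0 \<notin> set (map shadow_factor ts)"
    by (auto simp: shadow_factor_def)
  ultimately have "finite ?U"
    by (intro card_ge_0_finite) (simp add: zero_less_iff_neq_zero prod_list_zero_iff)
  moreover have "inj_on (Node a) ?U"
    by (simp add: inj_on_def)
  moreover have "Leaf \<notin> Node a ` ?U"
    by blast
  ultimately show ?case
    unfolding prefixes using card_U by (simp add: card_image shadow_factor_Node)
qed

theorem proposition3p12:
  fixes G :: "'a set" and ar :: "'a \<Rightarrow> nat" and s t :: "'a gtree"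
  assumes "finite G"
    and "\<forall>a\<in>G. ar a \<ge> 1"
    and "prefix_le G ar s t"
  shows "card (prefix_interval G ar s t) = ld (sh (diamond (tree_diff t s)))"
proof -
  from assms(3) obtain vs where vs: "length vs = nleaves s" and t: "t = graft s vs"
    and "is_gtree G ar t"
    unfolding prefix_le_def by blast
  then have "prefix_interval G ar s t = graft s ` {ws. list_all2 gtree_prefix ws vs}"
    by (simp add: prefix_interval_graft)
  moreover have "inj_on (graft s) {ws. list_all2 gtree_prefix ws vs}"
    using vs by (auto intro!: inj_onI graft_inject(1) dest: list_all2_lengthD)
  ultimately have "card (prefix_interval G ar s t) = card {ws. list_all2 gtree_prefix ws vs}"
    by (simp add: card_image)
  also have "\<dots> = prod_list (map shadow_factor vs)"
    by (simp add: card_list_all2 card_gtree_prefixes)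
  finally show ?thesis
    using vs t by (simp add: tree_diff_graft ld_sh_diamond)
qed

end
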